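(* Let $\mathfrak{n}$ be the real $7$-dimensional Lie algebra with basis $e_1,\dots,e_7$ whose nonzero brackets (up to antisymmetry) are $[e_1,e_2]=e_4$, $[e_1,e_4]=e_5$, $[e_1,e_5]=e_7$, $[e_1,e_6]=e_7$, $[e_2,e_3]=e_6$, $[e_2,e_4]=e_6$, $[e_2,e_5]=e_7$, $[e_3,e_4]=-e_7$. Then $\mathfrak{n}$ is not an Einstein nilradical.
   Context: A real nilpotent Lie algebra $\mathfrak{n}$ is called an Einstein nilradical if it admits an inner product such that the left-invariant Riemannian metric it defines on the simply connected nilpotent Lie group with Lie algebra $\mathfrak{n}$ is a nilsoliton, i.e. its Ricci operator satisfies $\mathrm{Ric}=c\,\mathrm{Id}+D$ for some $c\in\mathbb{R}$ and some derivation $D$ of $\mathfrak{n}$. Brackets of basis elements not listed are zero. *)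

theory Defs
  imports "HOL-Analysis.Analysis"
begin

definition inner_prod :: "('a::real_vector \<Rightarrow> 'a \<Rightarrow> real) \<Rightarrow> bool" where
  "inner_prod B \<longleftrightarrow> bilinear B \<and> (\<forall>x y. B x y = B y x) \<and> (\<forall>x. x \<noteq> 0 \<longrightarrow> B x x > 0)"

(* Levi-Civita connection of the left-invariant metric, on left-invariant fields (Koszul formula) *)
definition LC_conn :: "('a::real_vector \<Rightarrow> 'a \<Rightarrow> 'a) \<Rightarrow> ('a \<Rightarrow> 'a \<Rightarrow> real) \<Rightarrow> 'a \<Rightarrow> 'a \<Rightarrow> 'a" where
  "LC_conn L B X Y =
     (THE v. \<forall>Z. B v Z = (B (L X Y) Z - B (L Y Z) X + B (L Z X) Y) / 2)"

definition curv :: "('a::real_vector \<Rightarrow> 'a \<Rightarrow> 'a) \<Rightarrow> ('a \<Rightarrow> 'a \<Rightarrow> real) \<Rightarrow> 'a \<Rightarrow> 'a \<Rightarrow> 'a \<Rightarrow> 'a" where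
  "curv L B X Y Z =
     LC_conn L B X (LC_conn L B Y Z) - LC_conn L B Y (LC_conn L B X Z) - LC_conn L B (L X Y) Z"

definition ricci_form :: "(real^'n \<Rightarrow> real^'n \<Rightarrow> real^'n) \<Rightarrow> (real^'n \<Rightarrow> real^'n \<Rightarrow> real)
    \<Rightarrow> real^'n \<Rightarrow> real^'n \<Rightarrow> real" where
  "ricci_form L B X Y = (\<Sum>i\<in>UNIV. (curv L B (axis i 1) X Y) $ i)"

definition ricci_op :: "(real^'n \<Rightarrow> real^'n \<Rightarrow> real^'n) \<Rightarrow> (real^'n \<Rightarrow> real^'n \<Rightarrow> real)
    \<Rightarrow> real^'n \<Rightarrow> real^'n" where
  "ricci_op L B X = (THE v. \<forall>Y. B v Y = ricci_form L B X Y)"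

definition derivation :: "('a::real_vector \<Rightarrow> 'a \<Rightarrow> 'a) \<Rightarrow> ('a \<Rightarrow> 'a) \<Rightarrow> bool" where
  "derivation L D \<longleftrightarrow> linear D \<and> (\<forall>x y. D (L x y) = L (D x) y + L x (D y))"

definition nilsoliton :: "(real^'n \<Rightarrow> real^'n \<Rightarrow> real^'n) \<Rightarrow> (real^'n \<Rightarrow> real^'n \<Rightarrow> real) \<Rightarrow> bool" where
  "nilsoliton L B \<longleftrightarrow> (\<exists>c D. derivation L D \<and> (\<forall>X. ricci_op L B X = c *\<^sub>R X + D X))"

definition einstein_nilradical :: "(real^'n \<Rightarrow> real^'n \<Rightarrow> real^'n) \<Rightarrow> bool" where
  "einstein_nilradical L \<longleftrightarrow> (\<exists>B. inner_prod B \<and> nilsoliton L B)"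

(* The concrete algebra on real^7; basis vector e_k is axis k 1 (k = 1..7; note 7 = 0 in type 7) *)
definition ebas :: "7 \<Rightarrow> real^7" where
  "ebas k = axis k 1"

definition br0 :: "7 \<Rightarrow> 7 \<Rightarrow> real^7" where
  "br0 i j =
    (if i = 1 \<and> j = 2 then ebas 4
     else if i = 1 \<and> j = 4 then ebas 5
     else if i = 1 \<and> j = 5 then ebas 7
     else if i = 1 \<and> j = 6 then ebas 7
     else if i = 2 \<and> j = 3 then ebas 6
     else if i = 2 \<and> j = 4 then ebas 6
     else if i = 2 \<and> j = 5 then ebas 7
     else if i = 3 \<and> j = 4 then - ebas 7
     else 0)"

definition nbr :: "real^7 \<Rightarrow> real^7 \<Rightarrow> real^7" where
  "nbr x y = (\<Sum>i\<in>UNIV. \<Sum>j\<in>UNIV. (x $ i * y $ j) *\<^sub>R (br0 i j - br0 j i))"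

end

theory Submission
  imports Defs
begin

text \<open>Gram--Schmidt along
  the flag spanned by e_k, ..., e_7 yields a B-orthonormal frame f_1, ..., f_7 that is triangular
  with respect to e_1, ..., e_7. Every derivation of n is lower triangular in the standard basis,
  with diagonal t deg_k where deg = (1,1,2,2,3,3,4); since Ric is symmetric, D is therefore
  diagonal in the frame, and the structure constants C_ijk of the frame are graded:
  C_ijk = 0 unless deg_k = deg_i + deg_j. Here t is nonzero: otherwise ric(f_1,f_1) = ric(f_7,f_7),
  whereas ric(f_1,f_1) = -1/2 sum_ak C_1ak^2 and ric(f_7,f_7) = 1/4 sum_ak C_ak7^2, which would
  force [f_1, f_4] = 0.

  For the weight w = (-1,1,0,0,-1,1,0), which is orthogonal both to the constants and to deg,
  the sum of w_b ric(f_b,f_b) vanishes; the Ricci formula for nilpotent brackets turns it into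
  the sum of (w_k - w_i - w_j) C_ijk^2 / 4, in which every term is nonnegative (the few graded
  triples with w_k < w_i + w_j have C_ijk = 0 by the triangular shape of the frame). This forces
  C_146 = C_136 = C_157 = 0, and then the coordinates of [f_1,f_4], [f_1,f_3] and [f_1,f_5]
  contradict the positivity of the diagonal entries of the frame.\<close>

locale inner_product_form =
  fixes B :: "'a::real_vector \<Rightarrow> 'a \<Rightarrow> real"
  assumes inner_prod: "inner_prod B"
begin

lemma bilinear: "bilinear B"
  and sym: "B x y = B y x"
  and pos: "x \<noteq> 0 \<Longrightarrow> 0 < B x x"
  using inner_prod unfolding inner_prod_def by auto

lemma linear_left: "linear (\<lambda>x. B x z)"
  and linear_right: "linear (\<lambda>z. B x z)"
  using bilinear unfolding bilinear_def by auto

lemma B_ladd: "B (x + y) z = B x z + B y z"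
  and B_radd: "B z (x + y) = B z x + B z y"
  and B_lscale: "B (a *\<^sub>R x) z = a * B x z"
  and B_rscale: "B z (a *\<^sub>R x) = a * B z x"
  and B_ldiff: "B (x - y) z = B x z - B y z"
  and B_rdiff: "B z (x - y) = B z x - B z y"
  and B_lneg: "B (- x) z = - B x z"
  and B_rneg: "B z (- x) = - B z x"
  using bilinear_ladd bilinear_radd bilinear_lmul bilinear_rmul bilinear_lsub bilinear_rsub
    bilinear_lneg bilinear_rneg bilinear by fastforce+

lemma B_lsum: "B (\<Sum>i\<in>S. g i) z = (\<Sum>i\<in>S. B (g i) z)"
  and B_rsum: "B z (\<Sum>i\<in>S. g i) = (\<Sum>i\<in>S. B z (g i))"
  using linear_sum[OF linear_left] linear_sum[OF linear_right] by (simp_all add: o_def)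

lemmas B_simps = B_ladd B_radd B_lscale B_rscale B_ldiff B_rdiff B_lneg B_rneg B_lsum B_rsum

lemma eq_if_B_eq: "(\<And>z. B v z = B w z) \<Longrightarrow> v = w"
  using pos[of "v - w"] by (force simp: B_ldiff)

lemma The_B_eq: "(\<And>z. B v z = g z) \<Longrightarrow> (THE v. \<forall>z. B v z = g z) = v"
  by (rule the_equality) (auto intro: eq_if_B_eq)

end

locale orthonormal_frame = inner_product_form B
  for B :: "'a::real_vector \<Rightarrow> 'a \<Rightarrow> real" +
  fixes I :: "nat set" and f :: "nat \<Rightarrow> 'a"
  assumes finite_frame: "finite I"
    and orthonormal: "i \<in> I \<Longrightarrow> j \<in> I \<Longrightarrow> B (f i) (f j) = (if i = j then 1 else 0)"
    and expansion: "x = (\<Sum>m\<in>I. B x (f m) *\<^sub>R f m)"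
begin

lemma linear_expansion: "linear g \<Longrightarrow> g x = (\<Sum>m\<in>I. B x (f m) *\<^sub>R g (f m))"
  by (subst expansion) (simp add: linear_sum linear_scale)

lemma B_representer:
  assumes "linear g"
  shows "B (\<Sum>m\<in>I. g (f m) *\<^sub>R f m) z = g z"
proof -
  have "B (\<Sum>m\<in>I. g (f m) *\<^sub>R f m) z = (\<Sum>m\<in>I. B z (f m) *\<^sub>R g (f m))"
    unfolding B_lsum B_lscale by (simp add: sym[of "f _" z] mult.commute)
  also have "\<dots> = g z"
    by (rule linear_expansion[OF assms, symmetric])
  finally show ?thesis .
qed

end

locale filtered_struct_consts =
  fixes I :: "nat set" and C :: "nat \<Rightarrow> nat \<Rightarrow> nat \<Rightarrow> real" and w :: "nat \<Rightarrow> real"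
  assumes antisym: "\<And>i j k. i \<in> I \<Longrightarrow> j \<in> I \<Longrightarrow> k \<in> I \<Longrightarrow> C j i k = - C i j k"
    and filtered: "\<And>i j k. i \<in> I \<Longrightarrow> j \<in> I \<Longrightarrow> k \<in> I \<Longrightarrow> C i j k \<noteq> 0 \<Longrightarrow> w i + w j \<le> w k"
    and weight_pos: "\<And>i. i \<in> I \<Longrightarrow> 0 < w i"
begin

text \<open>For an orthonormal frame with structure constants C, the Koszul formula gives
  G i j k = B (nabla_(f_i) f_j) f_k.\<close>

definition G :: "nat \<Rightarrow> nat \<Rightarrow> nat \<Rightarrow> real"
  where "G i j k = (C i j k - C j k i + C k i j) / 2"

lemma prod_eq_0:
  assumes "i \<in> I" "j \<in> I" "k \<in> I" "p \<in> I" "q \<in> I" "r \<in> I"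
    and "w i + w j \<le> w k \<Longrightarrow> w p + w q \<le> w r \<Longrightarrow> False"
  shows "C i j k * C p q r = 0"
  using filtered assms by fastforce

lemma double_sum_eq_0:
  "(\<And>a k. a \<in> I \<Longrightarrow> k \<in> I \<Longrightarrow> g a k = 0) \<Longrightarrow> (\<Sum>a\<in>I. \<Sum>k\<in>I. g a k) = (0::real)"
  by (auto intro!: sum.neutral)

lemma double_sum_cong_swap:
  "(\<And>a k. a \<in> I \<Longrightarrow> k \<in> I \<Longrightarrow> g a k = h k a) \<Longrightarrow>
     (\<Sum>a\<in>I. \<Sum>k\<in>I. g a k) = (\<Sum>a\<in>I. \<Sum>k\<in>I. (h a k :: real))"
  by (subst sum.swap) (auto intro!: sum.cong)

lemma G_diag_eq_0:
  assumes "a \<in> I" "k \<in> I"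
  shows "G a k a = 0"
proof -
  have "C a k a = 0" using filtered[of a k a] weight_pos[of k] assms by force
  moreover have "C k a a = 0" using antisym[of a k a] \<open>C a k a = 0\<close> assms by auto
  moreover have "C a a k = 0" using antisym[of a a k] assms by auto
  ultimately show ?thesis by (simp add: G_def)
qed

context
  fixes b c assumes b: "b \<in> I" and c: "c \<in> I"
begin

lemma sum_G_G:
  "(\<Sum>a\<in>I. \<Sum>k\<in>I. G a c k * G b k a) =
     (2 * (\<Sum>a\<in>I. \<Sum>k\<in>I. C k a c * C b k a) - (\<Sum>a\<in>I. \<Sum>k\<in>I. C a k b * C a k c)) / 4"
proof -
  have vanish: "(\<Sum>a\<in>I. \<Sum>k\<in>I. C a c k * C b k a) = 0" "(\<Sum>a\<in>I. \<Sum>k\<in>I. C c k a * C a b k) = 0"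
    by (rule double_sum_eq_0, rule prod_eq_0; use b c weight_pos[OF b] weight_pos[OF c] in auto)+
  have swap1: "(\<Sum>a\<in>I. \<Sum>k\<in>I. C c k a * C b k a) = (\<Sum>a\<in>I. \<Sum>k\<in>I. C a c k * C a b k)"
    by (rule double_sum_cong_swap) (use antisym[of _ c] antisym[of _ b] b c in simp)
  have swap2: "(\<Sum>a\<in>I. \<Sum>k\<in>I. C c k a * C k a b) = (\<Sum>a\<in>I. \<Sum>k\<in>I. C a c k * C k a b)"
    apply (rule double_sum_cong_swap)
    subgoal for a k using antisym[of k c a] antisym[of a k b] b c by simp
    done
  have swap3: "(\<Sum>a\<in>I. \<Sum>k\<in>I. C k a c * C a b k) = (\<Sum>a\<in>I. \<Sum>k\<in>I. C k a c * C b k a)"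
    apply (rule double_sum_cong_swap)
    subgoal for a k using antisym[of a k c] antisym[of b a k] b c by simp
    done
  have swap4: "(\<Sum>a\<in>I. \<Sum>k\<in>I. C k a c * C k a b) = (\<Sum>a\<in>I. \<Sum>k\<in>I. C a k b * C a k c)"
    by (rule double_sum_cong_swap) (simp add: mult.commute)
  have expand: "G a c k * G b k a = (C a c k * C b k a - C a c k * C k a b + C a c k * C a b k
      - C c k a * C b k a + C c k a * C k a b - C c k a * C a b k
      + C k a c * C b k a - C k a c * C k a b + C k a c * C a b k) / 4" for a k
    unfolding G_def by (simp add: algebra_simps)
  have "(\<Sum>a\<in>I. \<Sum>k\<in>I. G a c k * G b k a) =
      ((\<Sum>a\<in>I. \<Sum>k\<in>I. C a c k * C b k a) - (\<Sum>a\<in>I. \<Sum>k\<in>I. C a c k * C k a b)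
       + (\<Sum>a\<in>I. \<Sum>k\<in>I. C a c k * C a b k) - (\<Sum>a\<in>I. \<Sum>k\<in>I. C c k a * C b k a)
       + (\<Sum>a\<in>I. \<Sum>k\<in>I. C c k a * C k a b) - (\<Sum>a\<in>I. \<Sum>k\<in>I. C c k a * C a b k)
       + (\<Sum>a\<in>I. \<Sum>k\<in>I. C k a c * C b k a) - (\<Sum>a\<in>I. \<Sum>k\<in>I. C k a c * C k a b)
       + (\<Sum>a\<in>I. \<Sum>k\<in>I. C k a c * C a b k)) / 4"
    unfolding expand by (simp only: sum_divide_distrib[symmetric] sum.distrib sum_subtractf)
  then show ?thesis
    unfolding vanish swap1 swap2 swap3 swap4 by argo
qed

lemma sum_C_G:
  "(\<Sum>a\<in>I. \<Sum>m\<in>I. C a b m * G m c a) =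
     ((\<Sum>a\<in>I. \<Sum>k\<in>I. C b a k * C c a k) - (\<Sum>a\<in>I. \<Sum>k\<in>I. C k a c * C b k a)) / 2"
proof -
  have vanish: "(\<Sum>a\<in>I. \<Sum>m\<in>I. C a b m * C m c a) = 0"
    by (rule double_sum_eq_0, rule prod_eq_0) (use b c weight_pos[OF b] weight_pos[OF c] in auto)
  have swap1: "(\<Sum>a\<in>I. \<Sum>m\<in>I. C a b m * C c a m) = - (\<Sum>a\<in>I. \<Sum>k\<in>I. C b a k * C c a k)"
    unfolding sum_negf[symmetric] by (intro sum.cong refl) (use antisym[of b] b in simp)
  have swap2: "(\<Sum>a\<in>I. \<Sum>m\<in>I. C a b m * C a m c) = - (\<Sum>a\<in>I. \<Sum>k\<in>I. C k a c * C b k a)"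
    unfolding sum_negf[symmetric] by (rule double_sum_cong_swap) (use antisym[of b] b in simp)
  have expand: "C a b m * G m c a = (C a b m * C m c a - C a b m * C c a m + C a b m * C a m c) / 2" for a m
    unfolding G_def by (simp add: algebra_simps)
  have "(\<Sum>a\<in>I. \<Sum>m\<in>I. C a b m * G m c a) =
      ((\<Sum>a\<in>I. \<Sum>m\<in>I. C a b m * C m c a) - (\<Sum>a\<in>I. \<Sum>m\<in>I. C a b m * C c a m)
       + (\<Sum>a\<in>I. \<Sum>m\<in>I. C a b m * C a m c)) / 2"
    unfolding expand by (simp only: sum_divide_distrib[symmetric] sum.distrib sum_subtractf)
  then show ?thesis
    unfolding vanish swap1 swap2 by argo
qed

lemma ricci_sum:
  "(\<Sum>a\<in>I. (\<Sum>k\<in>I. G b c k * G a k a) - (\<Sum>k\<in>I. G a c k * G b k a) - (\<Sum>m\<in>I. C a b m * G m c a))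
    = - (\<Sum>a\<in>I. \<Sum>k\<in>I. C b a k * C c a k) / 2 + (\<Sum>a\<in>I. \<Sum>k\<in>I. C a k b * C a k c) / 4"
proof -
  have "(\<Sum>a\<in>I. (\<Sum>k\<in>I. G b c k * G a k a) - (\<Sum>k\<in>I. G a c k * G b k a) - (\<Sum>m\<in>I. C a b m * G m c a))
      = (\<Sum>a\<in>I. \<Sum>k\<in>I. G b c k * G a k a) - (\<Sum>a\<in>I. \<Sum>k\<in>I. G a c k * G b k a)
        - (\<Sum>a\<in>I. \<Sum>m\<in>I. C a b m * G m c a)"
    by (simp only: sum_subtractf)
  also have "(\<Sum>a\<in>I. \<Sum>k\<in>I. G b c k * G a k a) = 0"
    by (rule double_sum_eq_0) (simp add: G_diag_eq_0)
  finally show ?thesis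
    unfolding sum_G_G sum_C_G by argo
qed

end

end

lemma weighted_square_sum:
  fixes C :: "nat \<Rightarrow> nat \<Rightarrow> nat \<Rightarrow> real" and w R :: "nat \<Rightarrow> real"
  assumes antisym: "\<And>i j k. C j i k = - C i j k"
    and R: "\<And>b. b \<in> I \<Longrightarrow>
      R b = - (\<Sum>a\<in>I. \<Sum>k\<in>I. C b a k * C b a k) / 2 + (\<Sum>a\<in>I. \<Sum>k\<in>I. C a k b * C a k b) / 4"
  shows "(\<Sum>b\<in>I. w b * R b) = (\<Sum>i\<in>I. \<Sum>j\<in>I. \<Sum>k\<in>I. (w k - w i - w j) * (C i j k * C i j k)) / 4"
proof -
  define P where "P = (\<Sum>i\<in>I. \<Sum>j\<in>I. \<Sum>k\<in>I. w i * (C i j k * C i j k))"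
  define Q where "Q = (\<Sum>i\<in>I. \<Sum>j\<in>I. \<Sum>k\<in>I. w j * (C i j k * C i j k))"
  define W where "W = (\<Sum>i\<in>I. \<Sum>j\<in>I. \<Sum>k\<in>I. w k * (C i j k * C i j k))"
  have "P = (\<Sum>j\<in>I. \<Sum>i\<in>I. \<Sum>k\<in>I. w i * (C i j k * C i j k))"
    unfolding P_def by (rule sum.swap)
  also have "\<dots> = Q"
    unfolding Q_def using antisym by (intro sum.cong refl) (metis mult_minus_left mult_minus_right minus_minus)
  finally have PQ: "P = Q" .
  have P: "(\<Sum>b\<in>I. w b * (\<Sum>a\<in>I. \<Sum>k\<in>I. C b a k * C b a k)) = P"
    unfolding P_def by (simp add: sum_distrib_left)
  have "(\<Sum>b\<in>I. w b * (\<Sum>a\<in>I. \<Sum>k\<in>I. C a k b * C a k b)) =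
      (\<Sum>b\<in>I. \<Sum>a\<in>I. \<Sum>k\<in>I. w b * (C a k b * C a k b))"
    by (simp add: sum_distrib_left)
  also have "\<dots> = (\<Sum>a\<in>I. \<Sum>b\<in>I. \<Sum>k\<in>I. w b * (C a k b * C a k b))"
    by (rule sum.swap)
  also have "\<dots> = (\<Sum>a\<in>I. \<Sum>k\<in>I. \<Sum>b\<in>I. w b * (C a k b * C a k b))"
    by (rule sum.cong[OF refl], rule sum.swap)
  finally have W: "(\<Sum>b\<in>I. w b * (\<Sum>a\<in>I. \<Sum>k\<in>I. C a k b * C a k b)) = W"
    unfolding W_def .
  have "(\<Sum>b\<in>I. w b * R b) = (\<Sum>b\<in>I. - (w b * (\<Sum>a\<in>I. \<Sum>k\<in>I. C b a k * C b a k)) / 2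
        + w b * (\<Sum>a\<in>I. \<Sum>k\<in>I. C a k b * C a k b) / 4)"
    by (intro sum.cong refl) (simp add: R algebra_simps)
  also have "\<dots> = - P / 2 + W / 4"
    unfolding P[symmetric] W[symmetric]
    by (simp add: sum.distrib sum_subtractf sum_divide_distrib sum_negf)
  also have "\<dots> = (W - P - Q) / 4"
    using PQ by simp
  also have "W - P - Q = (\<Sum>i\<in>I. \<Sum>j\<in>I. \<Sum>k\<in>I. (w k - w i - w j) * (C i j k * C i j k))"
    unfolding P_def Q_def W_def by (simp add: left_diff_distrib sum_subtractf)
  finally show ?thesis .
qed

lemma double_sum_squares_eq_0:
  fixes g :: "nat \<Rightarrow> nat \<Rightarrow> real"
  assumes "finite I" "(\<Sum>a\<in>I. \<Sum>k\<in>I. g a k * g a k) = 0" "a \<in> I" "k \<in> I"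
  shows "g a k = 0"
proof -
  have "(\<Sum>k\<in>I. g a k * g a k) = 0"
    using assms by (subst (asm) sum_nonneg_eq_0_iff) (auto intro: sum_nonneg)
  then show ?thesis
    using assms by (subst (asm) sum_nonneg_eq_0_iff) auto
qed

lemma triple_sum_nonneg_eq_0:
  fixes g :: "nat \<Rightarrow> nat \<Rightarrow> nat \<Rightarrow> real"
  assumes "finite I" "\<And>i j k. i \<in> I \<Longrightarrow> j \<in> I \<Longrightarrow> k \<in> I \<Longrightarrow> 0 \<le> g i j k"
    and "(\<Sum>i\<in>I. \<Sum>j\<in>I. \<Sum>k\<in>I. g i j k) = 0" "i \<in> I" "j \<in> I" "k \<in> I"
  shows "g i j k = 0"
proof -
  have "(\<Sum>j\<in>I. \<Sum>k\<in>I. g i j k) = 0"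
    using assms by (subst (asm) sum_nonneg_eq_0_iff) (auto intro!: sum_nonneg)
  then have "(\<Sum>k\<in>I. g i j k) = 0"
    using assms by (subst (asm) sum_nonneg_eq_0_iff) (auto intro!: sum_nonneg)
  then show ?thesis
    using assms by (subst (asm) sum_nonneg_eq_0_iff) auto
qed

definition koszul :: "('a::real_vector \<Rightarrow> 'a \<Rightarrow> 'a) \<Rightarrow> ('a \<Rightarrow> 'a \<Rightarrow> real) \<Rightarrow> 'a \<Rightarrow> 'a \<Rightarrow> 'a \<Rightarrow> real"
  where "koszul L B X Y Z = (B (L X Y) Z - B (L Y Z) X + B (L Z X) Y) / 2"

definition struct_const :: "('a::real_vector \<Rightarrow> 'a \<Rightarrow> 'a) \<Rightarrow> ('a \<Rightarrow> 'a \<Rightarrow> real) \<Rightarrow> (nat \<Rightarrow> 'a)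
    \<Rightarrow> nat \<Rightarrow> nat \<Rightarrow> nat \<Rightarrow> real"
  where "struct_const L B f i j k = B (L (f i) (f j)) (f k)"

locale lie_frame = orthonormal_frame B I f
  for B :: "real^'n \<Rightarrow> real^'n \<Rightarrow> real" and I f +
  fixes L :: "real^'n \<Rightarrow> real^'n \<Rightarrow> real^'n"
  assumes bilinear_bracket: "bilinear L"
begin

abbreviation C :: "nat \<Rightarrow> nat \<Rightarrow> nat \<Rightarrow> real" where "C \<equiv> struct_const L B f"

abbreviation \<Gamma> :: "nat \<Rightarrow> nat \<Rightarrow> nat \<Rightarrow> real" where "\<Gamma> i j k \<equiv> koszul L B (f i) (f j) (f k)"

lemma koszul_frame: "\<Gamma> i j k = (C i j k - C j k i + C k i j) / 2"
  unfolding koszul_def struct_const_def ..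

lemma bracket_expansion: "L (f i) (f j) = (\<Sum>m\<in>I. C i j m *\<^sub>R f m)"
  unfolding struct_const_def by (rule expansion)

lemma linear_koszul1: "linear (\<lambda>X. koszul L B X Y Z)"
  and linear_koszul2: "linear (\<lambda>Y. koszul L B X Y Z)"
  and linear_koszul3: "linear (\<lambda>Z. koszul L B X Y Z)"
  using bilinear_bracket
  by (auto intro!: linearI simp: koszul_def B_simps bilinear_ladd bilinear_radd bilinear_lmul
      bilinear_rmul field_simps)

lemma LC_conn_expansion: "LC_conn L B X Y = (\<Sum>m\<in>I. koszul L B X Y (f m) *\<^sub>R f m)"
  unfolding LC_conn_def koszul_def[symmetric]
  by (rule The_B_eq) (rule B_representer[OF linear_koszul3])

lemma B_LC_conn: "B (LC_conn L B X Y) Z = koszul L B X Y Z"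
  unfolding LC_conn_expansion by (rule B_representer[OF linear_koszul3])

lemma linear_LC_conn1: "linear (\<lambda>X. LC_conn L B X Y)"
  and linear_LC_conn2: "linear (\<lambda>Y. LC_conn L B X Y)"
  unfolding LC_conn_expansion
  by (auto intro!: linearI simp: linear_add[OF linear_koszul1] linear_scale[OF linear_koszul1]
      linear_add[OF linear_koszul2] linear_scale[OF linear_koszul2]
      scaleR_add_left sum.distrib scaleR_sum_right)

lemma linear_curv1: "linear (\<lambda>Z. curv L B Z X Y)"
  and linear_curv3: "linear (\<lambda>Y. curv L B Z X Y)"
  unfolding curv_def using bilinear_bracket
  by (auto intro!: linearI simp: linear_add[OF linear_LC_conn1] linear_scale[OF linear_LC_conn1]
      linear_add[OF linear_LC_conn2] linear_scale[OF linear_LC_conn2] bilinear_ladd bilinear_lmul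
      algebra_simps)

lemma trace_frame:
  assumes "linear T"
  shows "(\<Sum>i\<in>UNIV. T (axis i 1) $ i) = (\<Sum>a\<in>I. B (T (f a)) (f a))"
proof -
  have "(\<Sum>i\<in>UNIV. T (axis i 1) $ i) = (\<Sum>i\<in>UNIV. \<Sum>a\<in>I. B (axis i 1) (f a) * T (f a) $ i)"
    by (subst linear_expansion[OF assms]) simp
  also have "\<dots> = (\<Sum>a\<in>I. B (\<Sum>i\<in>UNIV. T (f a) $ i *\<^sub>R axis i 1) (f a))"
    by (subst sum.swap) (simp add: B_simps mult.commute)
  also have "\<dots> = (\<Sum>a\<in>I. B (T (f a)) (f a))"
    by (simp only: basis_expansion[where 'a=real, unfolded scalar_mult_eq_scaleR])
  finally show ?thesis .
qed

lemma ricci_form_frame_trace: "ricci_form L B X Y = (\<Sum>a\<in>I. B (curv L B (f a) X Y) (f a))"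
  unfolding ricci_form_def by (rule trace_frame[OF linear_curv1])

lemma linear_ricci_form: "linear (\<lambda>Y. ricci_form L B X Y)"
  unfolding ricci_form_frame_trace
  by (auto intro!: linearI simp: linear_add[OF linear_curv3] linear_scale[OF linear_curv3] B_simps
      sum.distrib sum_distrib_left)

lemma B_ricci_op: "B (ricci_op L B X) Y = ricci_form L B X Y"
proof -
  have "ricci_op L B X = (\<Sum>m\<in>I. ricci_form L B X (f m) *\<^sub>R f m)"
    unfolding ricci_op_def by (rule The_B_eq) (rule B_representer[OF linear_ricci_form])
  then show ?thesis by (simp add: B_representer[OF linear_ricci_form])
qed

lemma ricci_form_frame: "ricci_form L B (f b) (f c) = (\<Sum>a\<in>I.
   (\<Sum>k\<in>I. \<Gamma> b c k * \<Gamma> a k a) - (\<Sum>k\<in>I. \<Gamma> a c k * \<Gamma> b k a) - (\<Sum>m\<in>I. C a b m * \<Gamma> m c a))"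
  unfolding ricci_form_frame_trace
proof (rule sum.cong[OF refl])
  fix a
  have koszul_sum1: "koszul L B (\<Sum>k\<in>I. u k *\<^sub>R f k) Y Z = (\<Sum>k\<in>I. u k * koszul L B (f k) Y Z)"
    and koszul_sum2: "koszul L B X (\<Sum>k\<in>I. u k *\<^sub>R f k) Z = (\<Sum>k\<in>I. u k * koszul L B X (f k) Z)"
    for u X Y Z
    by (simp_all add: linear_sum[OF linear_koszul1] linear_scale[OF linear_koszul1]
        linear_sum[OF linear_koszul2] linear_scale[OF linear_koszul2])
  have "B (curv L B (f a) (f b) (f c)) (f a) =
     koszul L B (f a) (LC_conn L B (f b) (f c)) (f a) - koszul L B (f b) (LC_conn L B (f a) (f c)) (f a)
     - koszul L B (L (f a) (f b)) (f c) (f a)"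
    unfolding curv_def by (simp add: B_ldiff B_LC_conn)
  also have "\<dots> = (\<Sum>k\<in>I. \<Gamma> b c k * \<Gamma> a k a) - (\<Sum>k\<in>I. \<Gamma> a c k * \<Gamma> b k a)
     - (\<Sum>m\<in>I. C a b m * \<Gamma> m c a)"
    unfolding LC_conn_expansion bracket_expansion koszul_sum1 koszul_sum2 ..
  finally show "B (curv L B (f a) (f b) (f c)) (f a) = (\<Sum>k\<in>I. \<Gamma> b c k * \<Gamma> a k a)
     - (\<Sum>k\<in>I. \<Gamma> a c k * \<Gamma> b k a) - (\<Sum>m\<in>I. C a b m * \<Gamma> m c a)" .
qed

lemma struct_const_antisym:
  assumes "\<And>x y. L y x = - L x y"
  shows "C j i k = - C i j k"
  unfolding struct_const_def by (simp add: assms[where x = "f i" and y = "f j"] B_lneg)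

lemma ricci_form_filtered:
  fixes w :: "nat \<Rightarrow> real"
  assumes antisym: "\<And>x y. L y x = - L x y"
    and filtered: "\<And>i j k. i \<in> I \<Longrightarrow> j \<in> I \<Longrightarrow> k \<in> I \<Longrightarrow> C i j k \<noteq> 0 \<Longrightarrow> w i + w j \<le> w k"
    and weight_pos: "\<And>i. i \<in> I \<Longrightarrow> 0 < w i"
    and "b \<in> I" "c \<in> I"
  shows "ricci_form L B (f b) (f c) =
    - (\<Sum>a\<in>I. \<Sum>k\<in>I. C b a k * C c a k) / 2 + (\<Sum>a\<in>I. \<Sum>k\<in>I. C a k b * C a k c) / 4"
proof -
  have is_filtered: "filtered_struct_consts I C w"
  proof
    show "C j i k = - C i j k" for i j k by (rule struct_const_antisym[OF antisym])
  qed (fact filtered, fact weight_pos)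
  have "filtered_struct_consts.G C i j k = \<Gamma> i j k" for i j k
    by (simp add: filtered_struct_consts.G_def[OF is_filtered] koszul_frame)
  then show ?thesis
    using filtered_struct_consts.ricci_sum[OF is_filtered \<open>b \<in> I\<close> \<open>c \<in> I\<close>]
    unfolding ricci_form_frame by simp
qed

lemma bracket_single:
  assumes "p \<in> I" "\<And>m. m \<in> I \<Longrightarrow> m \<noteq> p \<Longrightarrow> C a b m = 0"
  shows "L (f a) (f b) = C a b p *\<^sub>R f p"
  unfolding bracket_expansion using assms finite_frame
  by (subst sum.remove[of _ p]) (auto intro!: sum.neutral)

end

lemma exhaust_7:
  fixes x :: 7
  shows "x = 1 \<or> x = 2 \<or> x = 3 \<or> x = 4 \<or> x = 5 \<or> x = 6 \<or> x = 7"
proof (induct x)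
  case (of_int z)
  then have "z = 0 \<or> z = 1 \<or> z = 2 \<or> z = 3 \<or> z = 4 \<or> z = 5 \<or> z = 6" by fastforce
  then show ?case by auto
qed

lemma UNIV_7: "(UNIV::7 set) = {1,2,3,4,5,6,7}"
  using exhaust_7 by auto

lemma sum_UNIV_7: "sum g (UNIV::7 set) = g 1 + g 2 + g 3 + g 4 + g 5 + g 6 + g 7"
  unfolding UNIV_7 by (simp add: ac_simps)

lemma all_7: "(\<forall>i::7. P i) \<longleftrightarrow> P 1 \<and> P 2 \<and> P 3 \<and> P 4 \<and> P 5 \<and> P 6 \<and> P 7"
  by (metis exhaust_7)

lemma nbr_component:
  "nbr x y $ 1 = 0"
  "nbr x y $ 2 = 0"
  "nbr x y $ 3 = 0"
  "nbr x y $ 4 = x$1 * y$2 - x$2 * y$1"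
  "nbr x y $ 5 = x$1 * y$4 - x$4 * y$1"
  "nbr x y $ 6 = x$2 * y$3 - x$3 * y$2 + x$2 * y$4 - x$4 * y$2"
  "nbr x y $ 7 = x$1 * y$5 - x$5 * y$1 + x$1 * y$6 - x$6 * y$1 + x$2 * y$5 - x$5 * y$2
     - x$3 * y$4 + x$4 * y$3"
  unfolding nbr_def br0_def ebas_def by (simp_all add: sum_UNIV_7 axis_def algebra_simps)

lemma nbr_antisym: "nbr y x = - nbr x y"
  by (simp add: vec_eq_iff all_7 nbr_component algebra_simps)

lemma bilinear_nbr: "bilinear nbr"
  unfolding bilinear_def
  by (auto intro!: linearI simp: vec_eq_iff all_7 nbr_component algebra_simps)

definition idx :: "nat \<Rightarrow> 7" where "idx k = of_nat k"

lemma idx_simps [simp]: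
  "idx (Suc 0) = 1" "idx 1 = 1" "idx 2 = 2" "idx 3 = 3" "idx 4 = 4" "idx 5 = 5" "idx 6 = 6" "idx 7 = 7"
  by (simp_all add: idx_def)

lemma range_7: "{1..7::nat} = {1,2,3,4,5,6,7}" by auto

lemma idx_inj: "m \<in> {1..7} \<Longrightarrow> k \<in> {1..7} \<Longrightarrow> idx m = idx k \<longleftrightarrow> m = k"
  unfolding range_7 by auto

lemma sum_UNIV_idx: "sum g (UNIV::7 set) = (\<Sum>k\<in>{1..7}. g (idx k))"
  unfolding sum_UNIV_7 range_7 by (simp add: ac_simps)

definition deg :: "nat \<Rightarrow> nat" where
  "deg k = (if k \<le> 2 then 1 else if k \<le> 4 then 2 else if k \<le> 6 then 3 else 4)"

lemma deg_mono: "m \<le> k \<Longrightarrow> deg m \<le> deg k"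
  and deg_ge_1: "1 \<le> deg k"
  and deg_le_4: "deg k \<le> 4"
  unfolding deg_def by auto

definition flag :: "nat \<Rightarrow> (real^7) set" where
  "flag k = {x. \<forall>m. 1 \<le> m \<and> m < k \<longrightarrow> x $ idx m = 0}"

definition deg_ge :: "nat \<Rightarrow> (real^7) set" where
  "deg_ge a = {x. \<forall>m\<in>{1..7}. deg m < a \<longrightarrow> x $ idx m = 0}"

lemma mem_deg_ge_iff:
  "x \<in> deg_ge a \<longleftrightarrow> (1 < a \<longrightarrow> x$1 = 0 \<and> x$2 = 0) \<and> (2 < a \<longrightarrow> x$3 = 0 \<and> x$4 = 0)
     \<and> (3 < a \<longrightarrow> x$5 = 0 \<and> x$6 = 0) \<and> (4 < a \<longrightarrow> x$7 = 0)"
  unfolding deg_ge_def range_7 deg_def by auto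

lemma nbr_deg_ge:
  assumes x: "x \<in> deg_ge a" and y: "y \<in> deg_ge b" and "1 \<le> a" "1 \<le> b"
  shows "nbr x y \<in> deg_ge (a + b)"
proof -
  from x have x1: "1 < a \<Longrightarrow> x$1 = 0 \<and> x$2 = 0" and x2: "2 < a \<Longrightarrow> x$3 = 0 \<and> x$4 = 0"
    and x3: "3 < a \<Longrightarrow> x$5 = 0 \<and> x$6 = 0" unfolding mem_deg_ge_iff by auto
  from y have y1: "1 < b \<Longrightarrow> y$1 = 0 \<and> y$2 = 0" and y2: "2 < b \<Longrightarrow> y$3 = 0 \<and> y$4 = 0"
    and y3: "3 < b \<Longrightarrow> y$5 = 0 \<and> y$6 = 0" unfolding mem_deg_ge_iff by auto
  have "nbr x y $ 4 = 0" if "2 < a + b"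
  proof (cases "a = 1")
    case True
    then show ?thesis using that y1 by (simp add: nbr_component)
  next
    case False
    then show ?thesis using \<open>1 \<le> a\<close> x1 by (simp add: nbr_component)
  qed
  moreover have "nbr x y $ 5 = 0 \<and> nbr x y $ 6 = 0" if "3 < a + b"
  proof -
    have "a = 1 \<and> 2 < b \<or> a = 2 \<and> 1 < b \<or> 2 < a"
      using that \<open>1 \<le> a\<close> by linarith
    then show ?thesis
      using x1 x2 y1 y2 by (auto simp: nbr_component)
  qed
  moreover have "nbr x y $ 7 = 0" if "4 < a + b"
  proof -
    have "a = 1 \<and> 3 < b \<or> a = 2 \<and> 2 < b \<or> a = 3 \<and> 1 < b \<or> 3 < a"
      using that \<open>1 \<le> a\<close> by linarith
    then show ?thesis
      using x1 x2 x3 y1 y2 y3 by (auto simp: nbr_component)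
  qed
  ultimately show ?thesis
    unfolding mem_deg_ge_iff by (simp add: nbr_component)
qed

lemma flag_imp_deg_ge: "i \<in> {1..7} \<Longrightarrow> x \<in> flag i \<Longrightarrow> x \<in> deg_ge (deg i)"
  unfolding deg_ge_def flag_def
proof (intro CollectI ballI impI)
  fix m assume i: "i \<in> {1..7}" and x: "x \<in> {x. \<forall>m. 1 \<le> m \<and> m < i \<longrightarrow> x $ idx m = 0}"
    and m: "m \<in> {1..7}" and l: "deg m < deg i"
  have "m < i" using deg_mono[of i m] l by (cases "i \<le> m") auto
  then show "x $ idx m = 0" using x m by auto
qed

lemma deg_ge_imp_flag: "k \<in> {1..7} \<Longrightarrow> deg k < a \<Longrightarrow> x \<in> deg_ge a \<Longrightarrow> x \<in> flag (k+1)"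
  unfolding deg_ge_def flag_def
proof (intro CollectI allI impI)
  fix m assume k: "k \<in> {1..7}" and l: "deg k < a" and x: "x \<in> {x. \<forall>m\<in>{1..7}. deg m < a \<longrightarrow> x $ idx m = 0}"
    and m: "1 \<le> m \<and> m < k + 1"
  have "deg m < a" using deg_mono[of m k] l m by auto
  then show "x $ idx m = 0" using x m k by auto
qed

lemma axis_component: "axis i (1::real) $ j = (if j = i then 1 else 0)"
  by (simp add: axis_def)

lemma nbr_basis:
  "nbr (axis 1 1) (axis 2 1) = axis 4 1" "nbr (axis 1 1) (axis 3 1) = 0"
  "nbr (axis 1 1) (axis 4 1) = axis 5 1" "nbr (axis 1 1) (axis 5 1) = axis 7 1"
  "nbr (axis 1 1) (axis 6 1) = axis 7 1" "nbr (axis 1 1) (axis 7 1) = 0"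
  "nbr (axis 2 1) (axis 3 1) = axis 6 1" "nbr (axis 2 1) (axis 4 1) = axis 6 1"
  "nbr (axis 2 1) (axis 5 1) = axis 7 1" "nbr (axis 2 1) (axis 6 1) = 0"
  "nbr (axis 3 1) (axis 4 1) = - axis 7 1" "nbr (axis 3 1) (axis 6 1) = 0"
  by (simp_all add: vec_eq_iff all_7 nbr_component axis_def)

definition der_scale :: "(real^7 \<Rightarrow> real^7) \<Rightarrow> real" where
  "der_scale D = D (axis 1 1) $ 1"

lemma derivation_matrix:
  assumes der: "derivation nbr D"
  shows "D (axis 2 1) $ 1 = 0 \<and> D (axis 3 1) $ 1 = 0 \<and> D (axis 4 1) $ 1 = 0 \<and> D (axis 5 1) $ 1 = 0
    \<and> D (axis 6 1) $ 1 = 0 \<and> D (axis 7 1) $ 1 = 0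
    \<and> D (axis 3 1) $ 2 = 0 \<and> D (axis 4 1) $ 2 = 0 \<and> D (axis 5 1) $ 2 = 0
    \<and> D (axis 6 1) $ 2 = 0 \<and> D (axis 7 1) $ 2 = 0
    \<and> D (axis 4 1) $ 3 = 0 \<and> D (axis 5 1) $ 3 = 0 \<and> D (axis 6 1) $ 3 = 0 \<and> D (axis 7 1) $ 3 = 0
    \<and> D (axis 5 1) $ 4 = 0 \<and> D (axis 6 1) $ 4 = 0 \<and> D (axis 7 1) $ 4 = 0
    \<and> D (axis 6 1) $ 5 = 0 \<and> D (axis 7 1) $ 5 = 0 \<and> D (axis 7 1) $ 6 = 0
    \<and> D (axis 2 1) $ 2 = der_scale D \<and> D (axis 3 1) $ 3 = 2 * der_scale D
    \<and> D (axis 4 1) $ 4 = 2 * der_scale D \<and> D (axis 5 1) $ 5 = 3 * der_scale D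
    \<and> D (axis 6 1) $ 6 = 3 * der_scale D \<and> D (axis 7 1) $ 7 = 4 * der_scale D"
proof -
  have lin: "linear D" using der unfolding derivation_def by auto
  have e: "D (nbr (axis p 1) (axis q 1)) $ m =
      nbr (D (axis p 1)) (axis q 1) $ m + nbr (axis p 1) (D (axis q 1)) $ m" for p q m
    using der unfolding derivation_def by simp
  \<comment> \<open>the components of the derivation identity that determine the upper triangle and the diagonal\<close>
  note eqs = e[of 2 4 5] e[of 2 6 7] e[of 3 6 7] e[of 2 3 4] e[of 1 2 1] e[of 1 4 1] e[of 2 3 1]
    e[of 1 5 1] e[of 1 3 4] e[of 1 2 2] e[of 1 4 2] e[of 2 3 2] e[of 1 5 2] e[of 1 2 3] e[of 1 4 3]
    e[of 2 3 3] e[of 1 5 3] e[of 1 4 4] e[of 1 7 5] e[of 2 5 5] e[of 1 5 6] e[of 1 2 4] e[of 1 4 5]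
    e[of 2 4 6] e[of 1 6 7] e[of 3 4 7] e[of 1 5 7] e[of 1 3 6] e[of 1 4 6] e[of 2 3 6]
  show ?thesis
    using eqs[unfolded nbr_basis linear_0[OF lin] linear_neg[OF lin] nbr_component axis_component, simplified]
    unfolding der_scale_def by linarith
qed

lemma derivation_lower_triangular:
  assumes "derivation nbr D" "i \<in> {1..7}" "j \<in> {1..7}" "i < j"
  shows "D (axis (idx j) 1) $ idx i = 0"
proof -
  have "i = 1 \<or> i = 2 \<or> i = 3 \<or> i = 4 \<or> i = 5 \<or> i = 6 \<or> i = 7"
    "j = 1 \<or> j = 2 \<or> j = 3 \<or> j = 4 \<or> j = 5 \<or> j = 6 \<or> j = 7"
    using assms(2,3) by auto
  then show ?thesis
    using derivation_matrix[OF assms(1)] \<open>i < j\<close> by (elim disjE) simp_all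
qed

lemma derivation_diagonal:
  assumes "derivation nbr D" "k \<in> {1..7}"
  shows "D (axis (idx k) 1) $ idx k = deg k * der_scale D"
proof -
  have "k = 1 \<or> k = 2 \<or> k = 3 \<or> k = 4 \<or> k = 5 \<or> k = 6 \<or> k = 7"
    using assms(2) by auto
  then show ?thesis
    using derivation_matrix[OF assms(1)] by (elim disjE) (simp_all add: deg_def der_scale_def)
qed

lemma linear_component:
  assumes "linear (D :: real^7 \<Rightarrow> real^7)"
  shows "D x $ idx i = (\<Sum>j\<in>{1..7}. x $ idx j * D (axis (idx j) 1) $ idx i)"
proof -
  have "D x = D (\<Sum>j\<in>UNIV. x $ j *\<^sub>R axis j 1)"
    by (simp only: basis_expansion[where 'a=real, unfolded scalar_mult_eq_scaleR])
  also have "\<dots> = (\<Sum>j\<in>UNIV. x $ j *\<^sub>R D (axis j 1))"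
    by (simp add: linear_sum[OF assms] linear_scale[OF assms])
  finally show ?thesis by (simp add: sum_UNIV_idx)
qed

lemma derivation_flag:
  assumes der: "derivation nbr D" and k: "k \<in> {1..7}" and x: "x \<in> flag k"
  shows "D x \<in> flag k" and "D x $ idx k = deg k * der_scale D * x $ idx k"
proof -
  have lin: "linear D" using der unfolding derivation_def by auto
  have x0: "x $ idx j = 0" if "1 \<le> j" "j < k" for j using x that unfolding flag_def by auto
  have term_0: "x $ idx j * D (axis (idx j) 1) $ idx i = 0"
    if "i \<in> {1..7}" "j \<in> {1..7}" "i \<le> k" "j \<noteq> i" for i j
  proof (cases "j < k")
    case True
    then show ?thesis using x0 that by simp
  next
    case False
    then have "i < j" using that by auto
    then have "D (axis (idx j) 1) $ idx i = 0"
      using derivation_lower_triangular[OF der] that by blast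
    then show ?thesis by simp
  qed
  have row: "D x $ idx i = x $ idx i * D (axis (idx i) 1) $ idx i" if i: "i \<in> {1..7}" "i \<le> k" for i
  proof -
    have "D x $ idx i = x $ idx i * D (axis (idx i) 1) $ idx i
        + (\<Sum>j\<in>{1..7} - {i}. x $ idx j * D (axis (idx j) 1) $ idx i)"
      unfolding linear_component[OF lin, of x i] using i by (intro sum.remove) auto
    also have "(\<Sum>j\<in>{1..7} - {i}. x $ idx j * D (axis (idx j) 1) $ idx i) = 0"
      using i by (intro sum.neutral ballI term_0) auto
    finally show ?thesis by simp
  qed
  show "D x \<in> flag k"
    unfolding flag_def using row x0 k by auto
  show "D x $ idx k = deg k * der_scale D * x $ idx k"
    using row[of k] k derivation_diagonal[OF der k] by simp
qed

lemma flag_mono: "x \<in> flag k \<Longrightarrow> j \<le> k \<Longrightarrow> x \<in> flag j"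
  unfolding flag_def by auto

lemma flag_subspace:
  "x \<in> flag k \<Longrightarrow> y \<in> flag k \<Longrightarrow> x - y \<in> flag k"
  "x \<in> flag k \<Longrightarrow> a *\<^sub>R x \<in> flag k"
  "(\<And>i. i \<in> S \<Longrightarrow> g i \<in> flag k) \<Longrightarrow> (\<Sum>i\<in>S. g i) \<in> flag k"
  unfolding flag_def by (auto simp: sum_component intro!: sum.neutral)

lemma flag_1: "x \<in> flag 1"
  unfolding flag_def by auto

lemma flag_8: "x \<in> flag 8 \<Longrightarrow> x = 0"
  unfolding flag_def by (auto simp: vec_eq_iff all_7 dest: spec[of _ 1] spec[of _ 2] spec[of _ 3]
     spec[of _ 4] spec[of _ 5] spec[of _ 6] spec[of _ 7])

lemma axis_mem_flag: "k \<in> {1..7} \<Longrightarrow> axis (idx k) 1 \<in> flag k"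
  unfolding flag_def axis_def using idx_inj by auto

definition flag_frame :: "(real^7 \<Rightarrow> real^7 \<Rightarrow> real) \<Rightarrow> nat \<Rightarrow> (nat \<Rightarrow> real^7) \<Rightarrow> bool" where
  "flag_frame B k f \<longleftrightarrow>
     (\<forall>i\<in>{k..7}. \<forall>j\<in>{k..7}. B (f i) (f j) = (if i = j then 1 else 0)) \<and>
     (\<forall>i\<in>{k..7}. f i \<in> flag i \<and> 0 < f i $ idx i) \<and>
     (\<forall>x\<in>flag k. x = (\<Sum>m\<in>{k..7}. B x (f m) *\<^sub>R f m))"

lemma flag_frame_8: "flag_frame B 8 f"
  unfolding flag_frame_def using flag_8 by auto

lemma flag_frame_orthogonal_vector:
  assumes B: "inner_prod B" and k: "1 \<le> k" "k \<le> 7" and f: "flag_frame B (k + 1) f"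
  obtains g where "g \<in> flag k" "g $ idx k = 1" "\<And>j. j \<in> {k+1..7} \<Longrightarrow> B g (f j) = 0"
proof
  interpret inner_product_form B by standard (rule B)
  from f have orth: "\<forall>i\<in>{k+1..7}. \<forall>j\<in>{k+1..7}. B (f i) (f j) = (if i = j then 1 else 0)"
    and inF: "\<forall>i\<in>{k+1..7}. f i \<in> flag i \<and> 0 < f i $ idx i"
    unfolding flag_frame_def by auto
  define g where "g = axis (idx k) 1 - (\<Sum>m\<in>{k+1..7}. B (axis (idx k) 1) (f m) *\<^sub>R f m)"
  have "f m \<in> flag k" if "m \<in> {k+1..7}" for m
    using inF that flag_mono[of "f m" m k] by auto
  then show "g \<in> flag k"
    unfolding g_def using k axis_mem_flag by (intro flag_subspace) auto
  show "g $ idx k = 1"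
    using k inF idx_inj unfolding g_def flag_def by (auto simp: axis_def intro!: sum.neutral)
  show "B g (f j) = 0" if j: "j \<in> {k+1..7}" for j
  proof -
    have "(\<Sum>m\<in>{k+1..7}. B (axis (idx k) 1) (f m) * B (f m) (f j)) =
        (\<Sum>m\<in>{k+1..7}. B (axis (idx k) 1) (f m) * (if m = j then 1 else 0))"
      by (rule sum.cong) (use orth j in auto)
    then show ?thesis
      using j unfolding g_def by (simp add: B_simps if_distrib cong: if_cong)
  qed
qed

lemma flag_frame_extend:
  assumes B: "inner_prod B" and k: "1 \<le> k" "k \<le> 7" and f: "flag_frame B (k + 1) f"
  shows "\<exists>f'. flag_frame B k f'"
proof -
  interpret inner_product_form B by standard (rule B)
  from f have orth: "\<forall>i\<in>{k+1..7}. \<forall>j\<in>{k+1..7}. B (f i) (f j) = (if i = j then 1 else 0)"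
    and inF: "\<forall>i\<in>{k+1..7}. f i \<in> flag i \<and> 0 < f i $ idx i"
    and exp: "\<forall>x\<in>flag (k+1). x = (\<Sum>m\<in>{k+1..7}. B x (f m) *\<^sub>R f m)"
    unfolding flag_frame_def by auto
  obtain g where g_flag: "g \<in> flag k" and g_k: "g $ idx k = 1"
    and g_orth: "\<And>j. j \<in> {k+1..7} \<Longrightarrow> B g (f j) = 0"
    using flag_frame_orthogonal_vector[OF B k f] by blast
  have Bgg: "0 < B g g"
    using pos g_k by (metis vec_eq_iff zero_index zero_neq_one)
  define f' where "f' = f(k := (1 / sqrt (B g g)) *\<^sub>R g)"
  have f'_k: "B (f' k) (f' k) = 1"
    using Bgg unfolding f'_def by (simp add: B_lscale B_rscale)
  have f'_orth: "B (f' k) (f' m) = 0" if "m \<in> {k+1..7}" for m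
    using g_orth[OF that] that unfolding f'_def by (simp add: B_lscale)
  have split: "{k..7} = insert k {k+1..7}" using k by auto
  have "\<forall>i\<in>{k..7}. \<forall>j\<in>{k..7}. B (f' i) (f' j) = (if i = j then 1 else 0)"
    unfolding split using orth f'_k f'_orth sym by (auto simp: f'_def)
  moreover have "\<forall>i\<in>{k..7}. f' i \<in> flag i \<and> 0 < f' i $ idx i"
    unfolding split using inF g_flag g_k Bgg by (auto simp: f'_def intro: flag_subspace)
  moreover have "x = (\<Sum>m\<in>{k..7}. B x (f' m) *\<^sub>R f' m)" if x: "x \<in> flag k" for x
  proof -
    define y where "y = x - (x $ idx k) *\<^sub>R g"
    have "y \<in> flag (k + 1)"
      using x g_flag g_k unfolding y_def flag_def by (auto simp: less_Suc_eq)
    then have y: "y = (\<Sum>m\<in>{k+1..7}. B y (f m) *\<^sub>R f m)" using exp by blast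
    have By: "B y (f m) = B x (f m)" if "m \<in> {k+1..7}" for m
      using g_orth that unfolding y_def by (simp add: B_ldiff B_lscale)
    have "B y g = (\<Sum>m\<in>{k+1..7}. B y (f m) * B (f m) g)"
      by (subst y) (simp add: B_lsum B_lscale)
    also have "\<dots> = 0"
      using g_orth by (simp add: sym[of "f _" g])
    finally have "B y g = 0" .
    then have Bx: "B x g = x $ idx k * B g g"
      unfolding y_def by (simp add: B_ldiff B_lscale)
    have "(\<Sum>m\<in>{k..7}. B x (f' m) *\<^sub>R f' m) = B x (f' k) *\<^sub>R f' k + (\<Sum>m\<in>{k+1..7}. B y (f m) *\<^sub>R f m)"
      unfolding split by (simp add: f'_def By)
    also have "(\<Sum>m\<in>{k+1..7}. B y (f m) *\<^sub>R f m) = y"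
      by (rule y[symmetric])
    also have "B x (f' k) *\<^sub>R f' k = (x $ idx k) *\<^sub>R g"
      using Bx Bgg by (simp add: f'_def B_rscale)
    finally show ?thesis unfolding y_def by simp
  qed
  ultimately show ?thesis unfolding flag_frame_def by blast
qed

lemma flag_frame_exists:
  assumes "inner_prod B" "k \<in> {1..8}"
  shows "\<exists>f. flag_frame B k f"
  using assms(2)
proof (induction "8 - k" arbitrary: k)
  case 0
  then show ?case using flag_frame_8 by (metis atLeastAtMost_iff diff_is_0_eq le_antisym)
next
  case (Suc n)
  then obtain f where "flag_frame B (k + 1) f" by force
  then show ?case using flag_frame_extend[OF assms(1)] Suc.prems Suc.hyps by auto
qed

locale adapted_frame = lie_frame B "{1..7}" f nbr for B f +
  assumes frame_in_flag: "i \<in> {1..7} \<Longrightarrow> f i \<in> flag i"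
    and frame_diag_pos: "i \<in> {1..7} \<Longrightarrow> 0 < f i $ idx i"

lemma adapted_frame_exists:
  assumes "inner_prod B"
  shows "\<exists>f. adapted_frame B f"
proof -
  obtain f where f: "flag_frame B 1 f"
    using flag_frame_exists[OF assms, of 1] by auto
  have "adapted_frame B f"
  proof
    show "x = (\<Sum>m\<in>{1..7}. B x (f m) *\<^sub>R f m)" for x
      using f flag_1[of x] unfolding flag_frame_def by blast
  qed (use assms bilinear_nbr f in \<open>auto simp: flag_frame_def\<close>)
  then show ?thesis by blast
qed

context adapted_frame
begin

lemma frame_entry_eq_0: "i \<in> {1..7} \<Longrightarrow> 1 \<le> j \<Longrightarrow> j < i \<Longrightarrow> f i $ idx j = 0"
  using frame_in_flag unfolding flag_def by blast

lemma B_flag_frame_eq_0: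
  assumes x: "x \<in> flag (k + 1)" and "k \<le> 7" and "m \<in> {1..k}"
  shows "B x (f m) = 0"
  using \<open>m \<in> {1..k}\<close>
proof (induction m rule: less_induct)
  case (less m)
  have m: "m \<in> {1..7}" using less.prems \<open>k \<le> 7\<close> by auto
  have other_0: "B x (f m') * f m' $ idx m = 0" if "m' \<in> {1..7} - {m}" for m'
  proof (cases "m' < m")
    case True
    then show ?thesis using less.IH[of m'] less.prems that by auto
  next
    case False
    then show ?thesis using frame_entry_eq_0[of m' m] that m by auto
  qed
  have "0 = x $ idx m"
    using x less.prems unfolding flag_def by auto
  also have "\<dots> = (\<Sum>m'\<in>{1..7}. B x (f m') * f m' $ idx m)"
    using arg_cong[where f = "\<lambda>v. v $ idx m", OF expansion[of x]] by simp
  also have "\<dots> = B x (f m) * f m $ idx m + (\<Sum>m'\<in>{1..7} - {m}. B x (f m') * f m' $ idx m)"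
    using m by (intro sum.remove) auto
  also have "(\<Sum>m'\<in>{1..7} - {m}. B x (f m') * f m' $ idx m) = 0"
    by (intro sum.neutral ballI other_0)
  finally show ?case
    using frame_diag_pos[OF m] by simp
qed

lemma struct_const_filtered:
  assumes "i \<in> {1..7}" "j \<in> {1..7}" "k \<in> {1..7}" "C i j k \<noteq> 0"
  shows "deg i + deg j \<le> deg k"
proof (rule ccontr)
  assume "\<not> deg i + deg j \<le> deg k"
  moreover have "nbr (f i) (f j) \<in> deg_ge (deg i + deg j)"
    using assms frame_in_flag flag_imp_deg_ge deg_ge_1 by (intro nbr_deg_ge) auto
  ultimately have "nbr (f i) (f j) \<in> flag (k + 1)"
    using deg_ge_imp_flag[OF assms(3), of "deg i + deg j"] by simp
  then show False
    using B_flag_frame_eq_0[of _ k k] assms unfolding struct_const_def by auto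
qed

lemma struct_const_antisym_nbr: "C j i k = - C i j k"
  by (rule struct_const_antisym[OF nbr_antisym])

lemma ricci_form_adapted:
  assumes "b \<in> {1..7}" "c \<in> {1..7}"
  shows "ricci_form nbr B (f b) (f c) =
    - (\<Sum>a\<in>{1..7}. \<Sum>k\<in>{1..7}. C b a k * C c a k) / 2 + (\<Sum>a\<in>{1..7}. \<Sum>k\<in>{1..7}. C a k b * C a k c) / 4"
proof (rule ricci_form_filtered[OF nbr_antisym _ _ assms])
  show "real (deg i) + real (deg j) \<le> real (deg k)"
    if "i \<in> {1..7}" "j \<in> {1..7}" "k \<in> {1..7}" "C i j k \<noteq> 0" for i j k
    using struct_const_filtered[OF that] by simp
  show "0 < real (deg i)" for i
    using deg_ge_1[of i] by simp
qed

lemma ricci_form_adapted_sym: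
  "b \<in> {1..7} \<Longrightarrow> c \<in> {1..7} \<Longrightarrow> ricci_form nbr B (f b) (f c) = ricci_form nbr B (f c) (f b)"
  by (simp add: ricci_form_adapted mult.commute)

lemma frame_entries:
  "0 < f 1 $ 1" "0 < f 3 $ 3" "0 < f 4 $ 4" "0 < f 5 $ 5"
  "f 2 $ 1 = 0" "f 3 $ 1 = 0" "f 3 $ 2 = 0" "f 4 $ 1 = 0" "f 4 $ 2 = 0" "f 4 $ 3 = 0"
  "f 5 $ 1 = 0" "f 5 $ 2 = 0" "f 5 $ 3 = 0" "f 5 $ 4 = 0"
  "f 6 $ 1 = 0" "f 6 $ 2 = 0" "f 6 $ 3 = 0" "f 6 $ 4 = 0" "f 6 $ 5 = 0"
  using frame_diag_pos[of 1] frame_diag_pos[of 3] frame_diag_pos[of 4] frame_diag_pos[of 5]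
    frame_entry_eq_0[of 2 1] frame_entry_eq_0[of 3 1] frame_entry_eq_0[of 3 2]
    frame_entry_eq_0[of 4 1] frame_entry_eq_0[of 4 2] frame_entry_eq_0[of 4 3]
    frame_entry_eq_0[of 5 1] frame_entry_eq_0[of 5 2] frame_entry_eq_0[of 5 3] frame_entry_eq_0[of 5 4]
    frame_entry_eq_0[of 6 1] frame_entry_eq_0[of 6 2] frame_entry_eq_0[of 6 3] frame_entry_eq_0[of 6 4]
    frame_entry_eq_0[of 6 5]
  by simp_all

lemma struct_const_eq_0_by_entries: "C 2 3 5 = 0" "C 2 4 5 = 0" "C 2 6 7 = 0"
proof -
  have "nbr (f 2) (f p) $ idx m = 0" if "p \<in> {3, 4}" "1 \<le> m" "m < 6" for p m
  proof -
    from that have "m = 1 \<or> m = 2 \<or> m = 3 \<or> m = 4 \<or> m = 5" by auto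
    then show ?thesis using that frame_entries by (auto simp: nbr_component)
  qed
  then have "nbr (f 2) (f 3) \<in> flag 6" "nbr (f 2) (f 4) \<in> flag 6"
    unfolding flag_def by auto
  then show "C 2 3 5 = 0" "C 2 4 5 = 0"
    unfolding struct_const_def using B_flag_frame_eq_0[of _ 5 5] by auto
  have "nbr (f 2) (f 6) = 0"
    using frame_entries by (simp add: vec_eq_iff all_7 nbr_component)
  then show "C 2 6 7 = 0"
    unfolding struct_const_def by (simp add: bilinear_lzero[OF bilinear])
qed

end

definition balance_weight :: "nat \<Rightarrow> real" where
  "balance_weight i = (if i = 1 \<or> i = 5 then -1 else if i = 2 \<or> i = 6 then 1 else 0)"

lemma sum_balance_weight:
  "(\<Sum>b\<in>{1..7}. balance_weight b) = 0" "(\<Sum>b\<in>{1..7}. balance_weight b * deg b) = 0"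
  unfolding range_7 by (simp_all add: balance_weight_def deg_def)

lemma balance_weight_graded_nonneg:
  assumes "i \<in> {1..7}" "j \<in> {1..7}" "k \<in> {1..7}" "deg k = deg i + deg j" "i \<noteq> j"
    and "{i, j} \<noteq> {2, 3} \<or> k \<noteq> 5" "{i, j} \<noteq> {2, 4} \<or> k \<noteq> 5" "{i, j} \<noteq> {2, 6} \<or> k \<noteq> 7"
  shows "0 \<le> balance_weight k - balance_weight i - balance_weight j"
  using assms unfolding range_7 insert_iff empty_iff
  by (elim disjE) (simp_all add: deg_def balance_weight_def doubleton_eq_iff)

locale nilsoliton_frame = adapted_frame B f for B f +
  fixes c :: real and D :: "real^7 \<Rightarrow> real^7"
  assumes derivation: "derivation nbr D"
    and ricci_eq: "\<And>X. ricci_op nbr B X = c *\<^sub>R X + D X"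
begin

lemma linear_D: "linear D"
  using derivation unfolding derivation_def by auto

lemma ricci_form_eq: "ricci_form nbr B (f i) (f j) = c * B (f i) (f j) + B (D (f i)) (f j)"
  using B_ricci_op[of "f i" "f j"] by (simp add: ricci_eq B_ladd B_lscale)

lemma B_derivation_frame_lower:
  assumes "i \<in> {1..7}" "j \<in> {1..7}" "j < i"
  shows "B (D (f i)) (f j) = 0"
proof -
  have "D (f i) \<in> flag (j + 1)"
    using derivation_flag(1)[OF derivation assms(1) frame_in_flag] assms flag_mono by auto
  then show ?thesis
    using B_flag_frame_eq_0[of _ j j] assms by auto
qed

lemma B_derivation_frame_diag:
  assumes i: "i \<in> {1..7}"
  shows "B (D (f i)) (f i) = deg i * der_scale D"
proof -
  define y where "y = D (f i) - (deg i * der_scale D) *\<^sub>R f i"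
  have "D (f i) \<in> flag i" "D (f i) $ idx i = deg i * der_scale D * f i $ idx i"
    using derivation_flag[OF derivation i frame_in_flag[OF i]] by auto
  then have "y \<in> flag (i + 1)"
    using frame_in_flag[OF i] unfolding y_def flag_def by (auto simp: less_Suc_eq)
  then have "B y (f i) = 0"
    using B_flag_frame_eq_0[of _ i i] i by auto
  then show ?thesis
    unfolding y_def using orthonormal[OF i i] by (simp add: B_ldiff B_lscale)
qed

text \<open>Above the diagonal the matrix of D vanishes by the symmetry of the Ricci form.\<close>

lemma B_derivation_frame:
  assumes i: "i \<in> {1..7}" and j: "j \<in> {1..7}"
  shows "B (D (f i)) (f j) = (if i = j then deg i * der_scale D else 0)"
proof -
  have "B (D (f i)) (f j) = B (D (f j)) (f i)" if "i \<noteq> j"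
    using ricci_form_eq[of i j] ricci_form_eq[of j i] ricci_form_adapted_sym[OF i j]
      orthonormal[OF i j] orthonormal[OF j i] that by simp
  then show ?thesis
    using B_derivation_frame_lower[OF i j] B_derivation_frame_lower[OF j i] B_derivation_frame_diag[OF i]
    by (cases i j rule: linorder_cases) auto
qed

lemma derivation_frame_eigen:
  assumes i: "i \<in> {1..7}"
  shows "D (f i) = (deg i * der_scale D) *\<^sub>R f i"
  using expansion[of "D (f i)"] i
  by (simp add: B_derivation_frame if_distrib[where f = "\<lambda>a. a *\<^sub>R _"] cong: if_cong)

lemma ricci_form_frame_diag: "b \<in> {1..7} \<Longrightarrow> ricci_form nbr B (f b) (f b) = c + deg b * der_scale D"
  using ricci_form_eq[of b b] orthonormal[of b b] B_derivation_frame_diag by simp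

lemma struct_const_eigen:
  assumes "i \<in> {1..7}" "j \<in> {1..7}" "k \<in> {1..7}"
  shows "(deg i + deg j) * der_scale D * C i j k = deg k * der_scale D * C i j k"
proof -
  have "B (D (nbr (f i) (f j))) (f k) = (deg i + deg j) * der_scale D * C i j k"
    using derivation unfolding derivation_def struct_const_def
    by (simp add: derivation_frame_eigen[OF assms(1)] derivation_frame_eigen[OF assms(2)] bilinear_lmul[OF bilinear_nbr] bilinear_rmul[OF bilinear_nbr]
        B_ladd B_lscale algebra_simps)
  moreover have "B (D (nbr (f i) (f j))) (f k) = (\<Sum>m\<in>{1..7}. C i j m * B (D (f m)) (f k))"
    unfolding bracket_expansion by (simp add: linear_sum[OF linear_D] linear_scale[OF linear_D] B_lsum B_lscale)
  moreover have "\<dots> = deg k * der_scale D * C i j k"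
    using assms by (simp add: B_derivation_frame if_distrib[where f = "\<lambda>a. _ * a"] cong: if_cong)
  ultimately show ?thesis by simp
qed

lemma der_scale_nonzero: "der_scale D \<noteq> 0"
proof
  assume t0: "der_scale D = 0"
  define S where "S = (\<Sum>a\<in>{1..7}. \<Sum>k\<in>{1..7}. C 1 a k * C 1 a k)"
  define S' where "S' = (\<Sum>a\<in>{1..7}. \<Sum>k\<in>{1..7}. C a k 7 * C a k 7)"
  have "C a k 1 = 0" "C 7 a k = 0" if "a \<in> {1..7}" "k \<in> {1..7}" for a k
    using struct_const_filtered[of a k 1] struct_const_filtered[of 7 a k] deg_ge_1[of a] deg_ge_1[of k]
      deg_le_4[of k] that by (auto simp: deg_def)
  then have "(\<Sum>a\<in>{1..7}. \<Sum>k\<in>{1..7}. C a k 1 * C a k 1) = 0"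
    "(\<Sum>a\<in>{1..7}. \<Sum>k\<in>{1..7}. C 7 a k * C 7 a k) = 0"
    by (auto intro!: sum.neutral)
  then have "c = - S / 2" "c = S' / 4"
    using ricci_form_adapted[of 1 1] ricci_form_adapted[of 7 7]
      ricci_form_frame_diag[of 1] ricci_form_frame_diag[of 7] t0
    unfolding S_def S'_def by simp_all
  moreover have "0 \<le> S" "0 \<le> S'"
    unfolding S_def S'_def by (auto intro!: sum_nonneg)
  ultimately have "S = 0" by linarith
  then have "C 1 4 m = 0" if "m \<in> {1..7}" for m
    using double_sum_squares_eq_0[of "{1..7}" "\<lambda>a k. C 1 a k" 4 m] that unfolding S_def by simp
  then have "nbr (f 1) (f 4) = 0"
    unfolding bracket_expansion by (auto intro!: sum.neutral)
  then have "nbr (f 1) (f 4) $ 5 = 0" by simp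
  then show False
    using frame_entries by (simp add: nbr_component)
qed

lemma struct_const_graded:
  assumes "i \<in> {1..7}" "j \<in> {1..7}" "k \<in> {1..7}" "C i j k \<noteq> 0"
  shows "deg k = deg i + deg j"
proof -
  have "real (deg i + deg j) = real (deg k)"
    using struct_const_eigen[OF assms(1-3)] der_scale_nonzero assms(4) by simp
  then show ?thesis by linarith
qed

lemma struct_const_unbalanced_eq_0: "C 1 4 6 = 0" "C 1 3 6 = 0" "C 1 5 7 = 0"
proof -
  define g where "g i j k = (balance_weight k - balance_weight i - balance_weight j) * (C i j k * C i j k)"
    for i j k
  have "(\<Sum>b\<in>{1..7}. balance_weight b * ricci_form nbr B (f b) (f b)) =
      (\<Sum>b\<in>{1..7}. balance_weight b * c + (balance_weight b * deg b) * der_scale D)"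
    by (intro sum.cong refl) (simp add: ricci_form_frame_diag algebra_simps)
  also have "\<dots> = 0"
    using sum_balance_weight by (simp add: sum.distrib sum_distrib_right[symmetric])
  moreover have "(\<Sum>b\<in>{1..7}. balance_weight b * ricci_form nbr B (f b) (f b)) =
      (\<Sum>i\<in>{1..7}. \<Sum>j\<in>{1..7}. \<Sum>k\<in>{1..7}. g i j k) / 4"
    unfolding g_def by (rule weighted_square_sum[OF struct_const_antisym_nbr], rule ricci_form_adapted)
  ultimately have total: "(\<Sum>i\<in>{1..7}. \<Sum>j\<in>{1..7}. \<Sum>k\<in>{1..7}. g i j k) = 0"
    by simp
  have g_nonneg: "0 \<le> g i j k" if "i \<in> {1..7}" "j \<in> {1..7}" "k \<in> {1..7}" for i j k
  proof (cases "C i j k = 0")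
    case False
    then have "i \<noteq> j" using struct_const_antisym_nbr[of i i k] by auto
    moreover have "{i, j} \<noteq> {2, 3} \<or> k \<noteq> 5" "{i, j} \<noteq> {2, 4} \<or> k \<noteq> 5" "{i, j} \<noteq> {2, 6} \<or> k \<noteq> 7"
      using False struct_const_eq_0_by_entries struct_const_antisym_nbr[of 2 3 5]
        struct_const_antisym_nbr[of 2 4 5] struct_const_antisym_nbr[of 2 6 7]
      by (auto simp: doubleton_eq_iff)
    ultimately show ?thesis
      unfolding g_def using balance_weight_graded_nonneg struct_const_graded False that by simp
  qed (simp add: g_def)
  have "g i j k = 0" if "i \<in> {1..7}" "j \<in> {1..7}" "k \<in> {1..7}" for i j k
    by (rule triple_sum_nonneg_eq_0[OF _ g_nonneg total that]) simp
  from this[of 1 4 6] this[of 1 3 6] this[of 1 5 7]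
  show "C 1 4 6 = 0" "C 1 3 6 = 0" "C 1 5 7 = 0"
    by (simp_all add: g_def balance_weight_def)
qed

lemma struct_const_eq_0_off_degree:
  "i \<in> {1..7} \<Longrightarrow> j \<in> {1..7} \<Longrightarrow> m \<in> {1..7} \<Longrightarrow> deg m \<noteq> deg i + deg j \<Longrightarrow> C i j m = 0"
  using struct_const_graded by blast

text \<open>Reading off coordinates 5, 6 and 7 of three brackets in the triangular frame gives a
  polynomial system that has no solution with positive diagonal entries.\<close>

theorem impossible: False
proof -
  have "nbr (f 1) (f 4) = C 1 4 5 *\<^sub>R f 5"
  proof (rule bracket_single)
    show "C 1 4 m = 0" if "m \<in> {1..7}" "m \<noteq> 5" for m
      using that struct_const_unbalanced_eq_0(1) struct_const_eq_0_off_degree[of 1 4 m]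
      unfolding range_7 by (auto simp: deg_def)
  qed simp
  then have e14: "f 1 $ 1 * f 4 $ 4 = C 1 4 5 * f 5 $ 5" "f 1 $ 2 * f 4 $ 4 = C 1 4 5 * f 5 $ 6"
    using frame_entries by (simp_all add: vec_eq_iff all_7 nbr_component)
  have "nbr (f 1) (f 3) = C 1 3 5 *\<^sub>R f 5"
  proof (rule bracket_single)
    show "C 1 3 m = 0" if "m \<in> {1..7}" "m \<noteq> 5" for m
      using that struct_const_unbalanced_eq_0(2) struct_const_eq_0_off_degree[of 1 3 m]
      unfolding range_7 by (auto simp: deg_def)
  qed simp
  then have e13: "f 1 $ 1 * f 3 $ 4 = C 1 3 5 * f 5 $ 5" "f 1 $ 2 * (f 3 $ 3 + f 3 $ 4) = C 1 3 5 * f 5 $ 6"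
    using frame_entries by (simp_all add: vec_eq_iff all_7 nbr_component algebra_simps)
  have "nbr (f 1) (f 5) = C 1 5 7 *\<^sub>R f 7"
  proof (rule bracket_single)
    show "C 1 5 m = 0" if "m \<in> {1..7}" "m \<noteq> 7" for m
      using that struct_const_eq_0_off_degree[of 1 5 m] unfolding range_7 by (auto simp: deg_def)
  qed simp
  then have "nbr (f 1) (f 5) = 0"
    using struct_const_unbalanced_eq_0(3) by simp
  then have e15: "f 1 $ 1 * f 5 $ 5 + f 1 $ 1 * f 5 $ 6 + f 1 $ 2 * f 5 $ 5 = 0"
    using frame_entries by (simp add: vec_eq_iff all_7 nbr_component)
  have "f 4 $ 4 * (f 1 $ 1 * f 5 $ 6 - f 1 $ 2 * f 5 $ 5) = 0"
    using e14 by algebra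
  then have p6: "f 1 $ 1 * f 5 $ 6 = f 1 $ 2 * f 5 $ 5"
    using frame_entries by simp
  have "f 5 $ 5 * (f 1 $ 2 * f 3 $ 3) = 0"
    using e13 p6 by algebra
  then have "f 1 $ 2 = 0"
    using frame_entries by simp
  then show False
    using p6 e15 frame_entries by simp
qed

end

theorem mainTheorem3:
  shows "\<not> einstein_nilradical nbr"
proof
  assume "einstein_nilradical nbr"
  then obtain B c D where B: "inner_prod B" and "derivation nbr D"
    and "\<forall>X. ricci_op nbr B X = c *\<^sub>R X + D X"
    unfolding einstein_nilradical_def nilsoliton_def by blast
  moreover obtain f where "adapted_frame B f"
    using adapted_frame_exists[OF B] by blast
  ultimately have "nilsoliton_frame B f c D"
    by (simp add: nilsoliton_frame_def nilsoliton_frame_axioms_def)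
  then show False
    by (rule nilsoliton_frame.impossible)
qed

end
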